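(* Let $T$ be an interface element, $\mathbf u\in\mathbf{PC}^2_{int}(T)$, $s\in\{+,-\}$ and $s'$ the opposite sign. For every $i\in\mathcal I^{s'}$ and every $X\in T^s_\ast$, $$\mathbf u^{s'}(A_i)=\mathbf u^s(X)+\big((A_i-X)^T\otimes I_2\big)\mathrm{Vec}(\nabla\mathbf u^s(X))+\big((A_i-\widetilde Y_i)^T\otimes I_2\big)\big(M^s(\widetilde Y_i)-I_4\big)\mathrm{Vec}(\nabla\mathbf u^s(X))+\mathbf R^s_i(X),$$ where $\mathbf R^s_i=\mathbf R^s_{i1}+\mathbf R^s_{i2}+\mathbf R^s_{i3}$ with $$\mathbf R^s_{i1}(X)=\int_0^{\tilde t_i}(1-t)\tfrac{d^2}{dt^2}\mathbf u^s(Y_i(t,X))\,dt,\quad \mathbf R^s_{i2}(X)=\int_{\tilde t_i}^1(1-t)\tfrac{d^2}{dt^2}\mathbf u^{s'}(Y_i(t,X))\,dt,$$ $$\mathbf R^s_{i3}(X)=(1-\tilde t_i)\big((A_i-X)^T\otimes I_2\big)\big(M^s(\widetilde Y_i)-I_4\big)\int_0^{\tilde t_i}\tfrac{d}{dt}\mathrm{Vec}(\nabla\mathbf u^s(Y_i(t,X)))\,dt.$$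
   Context: Lamé parameters $\lambda^s,\mu^s>0$ on $\Omega^s$, $s=\pm$; stress $\sigma^s_{ij}(\mathbf u)=\lambda^s(\nabla\cdot\mathbf u)\delta_{ij}+2\mu^s\epsilon_{ij}(\mathbf u)$, $\epsilon_{ij}(\mathbf u)=\frac12(\partial_{x_j}u_i+\partial_{x_i}u_j)$. $\nabla\mathbf u$ is the Jacobian with $i$-th row $\nabla u_i$; $\mathrm{Vec}$ stacks the columns of a matrix into a vector; $\otimes$ is the Kronecker product; $I_n$ the identity. $T$ is a mesh element (triangle or rectangle) whose interior meets the interface $\Gamma$, which meets $\partial T$ at two points $D,E$ on different edges and is $C^2$ in $T$; $T^s=T\cap\Omega^s$. $\mathbf{PC}^2_{int}(T)$: $\mathbf u$ with $\mathbf u^s=\mathbf u|_{T^s}\in[C^2(\overline{T^s})]^2$, $\mathbf u^+=\mathbf u^-$ and $\sigma^+(\mathbf u^+)\mathbf n=\sigma^-(\mathbf u^-)\mathbf n$ on $\Gamma\cap T$. For $\widetilde X\in\Gamma\cap T$ with unit normal $(\tilde n_1,\tilde n_2)$, $N^s(\widetilde X)$ is the $4\times4$ matrix with rows $((\lambda^s+2\mu^s)\tilde n_1,\mu^s\tilde n_2,\mu^s\tilde n_2,\lambda^s\tilde n_1)$, $(\lambda^s\tilde n_2,\mu^s\tilde n_1,\mu^s\tilde n_1,(\lambda^s+2\mu^s)\tilde n_2)$, $(-\tilde n_2,0,\tilde n_1,0)$, $(0,-\tilde n_2,0,\tilde n_1)$, and $M^-=(N^+)^{-1}N^-$, $M^+=(N^-)^{-1}N^+$.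 Nodes $A_i$, $i\in\mathcal I$, are the vertices of $T$ (linear/bilinear case) or the edge midpoints (rotated $Q_1$ case); $\mathcal I^s=\{i:A_i\in T^s\}$. The segment $l=\overline{DE}$ splits $T$ into $\overline T^+,\overline T^-$ (labelled so that $\overline T^s$ is the part approximating $T^s$). $T_{int}$ is the union of $l_t\cap T$ over all tangent lines $l_t$ to $\Gamma\cap T$, and $T^s_\ast=\overline T^s\cap(T^s\setminus T_{int})$. $Y_i(t,X)=tA_i+(1-t)X$. For $X\in T^s_\ast$ and $i\in\mathcal I^{s'}$ the segment from $X$ to $A_i$ meets $\Gamma\cap T$ at exactly one point $\widetilde Y_i=Y_i(\tilde t_i,X)$, $\tilde t_i\in[0,1]$. *)

theory Defs
  imports "HOL-Analysis.Analysis"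
begin

(* Signs: s :: bool, True = '+', False = '-'; the opposite sign s' is \<not>s. *)

definition jac :: "(real^2 \<Rightarrow> real^2) \<Rightarrow> (real^2) set \<Rightarrow> real^2 \<Rightarrow> real^2^2" where
  "jac f S x = matrix (frechet_derivative f (at x within S))"

definition C2_on :: "(real^2) set \<Rightarrow> (real^2 \<Rightarrow> real^2) \<Rightarrow> bool" where
  "C2_on S f \<longleftrightarrow>
     (\<forall>x\<in>S. f differentiable (at x within S)) \<and>
     (\<forall>x\<in>S. (jac f S) differentiable (at x within S)) \<and>
     (\<forall>i. continuous_on S (\<lambda>x. jac (\<lambda>y. jac f S y $ i) S x))"

definition Vec :: "real^2^2 \<Rightarrow> real^4" where
  "Vec G = vector [G$1$1, G$2$1, G$1$2, G$2$2]"

(* the 2x4 matrix  p^T \<otimes> I_2  (Kronecker product of the row vector p^T with I_2) *)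
definition kronT_I2 :: "real^2 \<Rightarrow> real^4^2" where
  "kronT_I2 p = vector [vector [p$1, 0, p$2, 0], vector [0, p$1, 0, p$2]]"

definition stress :: "real \<Rightarrow> real \<Rightarrow> real^2^2 \<Rightarrow> real^2^2" where
  "stress lam mu G = (\<chi> i j. lam * (G$1$1 + G$2$2) * (if i = j then 1 else 0)
                              + 2 * mu * ((G$i$j + G$j$i) / 2))"

definition Nmat :: "real \<Rightarrow> real \<Rightarrow> real^2 \<Rightarrow> real^4^4" where
  "Nmat lam mu n = vector [
      vector [(lam + 2*mu) * n$1, mu * n$2, mu * n$2, lam * n$1],
      vector [lam * n$2, mu * n$1, mu * n$1, (lam + 2*mu) * n$2],
      vector [- n$2, 0, n$1, 0],
      vector [0, - n$2, 0, n$1]]"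

definition dcurve :: "(real \<Rightarrow> real^2) \<Rightarrow> real \<Rightarrow> real \<Rightarrow> real \<Rightarrow> real^2" where
  "dcurve \<gamma> a b \<tau> = vector_derivative \<gamma> (at \<tau> within {a..b})"

definition C2_arc :: "(real \<Rightarrow> real^2) \<Rightarrow> real \<Rightarrow> real \<Rightarrow> bool" where
  "C2_arc \<gamma> a b \<longleftrightarrow> a < b \<and> inj_on \<gamma> {a..b} \<and>
     (\<forall>\<tau>\<in>{a..b}. \<gamma> differentiable (at \<tau> within {a..b})) \<and>
     (\<forall>\<tau>\<in>{a..b}. dcurve \<gamma> a b differentiable (at \<tau> within {a..b})) \<and>
     continuous_on {a..b} (\<lambda>\<tau>. vector_derivative (dcurve \<gamma> a b) (at \<tau> within {a..b})) \<and>
     (\<forall>\<tau>\<in>{a..b}. dcurve \<gamma> a b \<tau> \<noteq> 0)"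

definition unit_normal :: "(real \<Rightarrow> real^2) \<Rightarrow> real \<Rightarrow> real \<Rightarrow> real \<Rightarrow> real^2" where
  "unit_normal \<gamma> a b \<tau> = (1 / norm (dcurve \<gamma> a b \<tau>)) *\<^sub>R
      vector [- (dcurve \<gamma> a b \<tau>)$2, (dcurve \<gamma> a b \<tau>)$1]"

definition triangle_elem :: "(real^2) set \<Rightarrow> (real^2) set \<Rightarrow> (real^2) set set \<Rightarrow> bool" where
  "triangle_elem T V Ed \<longleftrightarrow> (\<exists>p1 p2 p3. \<not> collinear {p1, p2, p3} \<and>
      T = convex hull {p1, p2, p3} \<and> V = {p1, p2, p3} \<and>
      Ed = {closed_segment p1 p2, closed_segment p2 p3, closed_segment p3 p1})"

definition rectangle_elem :: "(real^2) set \<Rightarrow> (real^2) set \<Rightarrow> (real^2) set set \<Rightarrow> bool" where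
  "rectangle_elem T V Ed \<longleftrightarrow> (\<exists>(a::real^2) b. a$1 < b$1 \<and> a$2 < b$2 \<and> T = cbox a b \<and>
      (let p1 = a; p2 = vector [b$1, a$2]; p3 = b; p4 = vector [a$1, b$2] in
        V = {p1, p2, p3, p4} \<and>
        Ed = {closed_segment p1 p2, closed_segment p2 p3, closed_segment p3 p4, closed_segment p4 p1}))"

(* nodes A_i: vertices (linear / bilinear IFE) or edge midpoints (rotated Q1, rectangles) *)
definition elem_nodes :: "(real^2) set \<Rightarrow> (real^2) set \<Rightarrow> (real^2) set set \<Rightarrow> (real^2) set \<Rightarrow> bool" where
  "elem_nodes T V Ed Nd \<longleftrightarrow>
     ((triangle_elem T V Ed \<or> rectangle_elem T V Ed) \<and> Nd = V) \<or>
     (rectangle_elem T V Ed \<and> Nd = {midpoint p q | p q. p \<in> V \<and> q \<in> V \<and> closed_segment p q \<in> Ed})"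

definition side :: "real^2 \<Rightarrow> real^2 \<Rightarrow> real^2 \<Rightarrow> real" where
  "side D E x = (E$1 - D$1) * (x$2 - D$2) - (E$2 - D$2) * (x$1 - D$1)"

definition Tbar :: "(real^2) set \<Rightarrow> (real^2) set \<Rightarrow> (real^2) set \<Rightarrow> real^2 \<Rightarrow> real^2 \<Rightarrow> (real^2) set" where
  "Tbar T V \<Omega>s D E = {x \<in> T. \<forall>v \<in> V \<inter> \<Omega>s. side D E x * side D E v \<ge> 0}"

definition Tint :: "(real^2) set \<Rightarrow> (real \<Rightarrow> real^2) \<Rightarrow> real \<Rightarrow> real \<Rightarrow> (real^2) set" where
  "Tint T \<gamma> a b = (\<Union>\<tau>\<in>{a..b}. {\<gamma> \<tau> + r *\<^sub>R dcurve \<gamma> a b \<tau> | r. True} \<inter> T)"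

definition interface_elem ::
  "(real^2) set \<Rightarrow> (real^2) set set \<Rightarrow> (real^2) set \<Rightarrow> (real \<Rightarrow> real^2) \<Rightarrow> real \<Rightarrow> real \<Rightarrow> bool" where
  "interface_elem T Ed \<Gamma> \<gamma> a b \<longleftrightarrow>
     interior T \<inter> \<Gamma> \<noteq> {} \<and> C2_arc \<gamma> a b \<and> \<Gamma> \<inter> T = \<gamma> ` {a..b} \<and>
     \<Gamma> \<inter> frontier T = {\<gamma> a, \<gamma> b} \<and>
     (\<exists>e1\<in>Ed. \<exists>e2\<in>Ed. e1 \<noteq> e2 \<and> \<gamma> a \<in> e1 \<and> \<gamma> b \<in> e2)"

end

theory Submission
  imports Defs
begin

text \<open>
  Along the segment Y t = t A + (1 - t) X, which meets the interface only at t = tt, apply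
  Taylor's formula with integral remainder to the piece of u on the side of X over [0, tt] and to
  the piece on the side of A over [tt, 1]. The two expansions are glued at Y tt by continuity of u
  and by the gradient jump Vec (grad u') = M Vec (grad u): the matrix N maps Vec of a gradient to
  the normal traction (first two rows) and the tangential derivative (last two rows), and both are
  continuous across the interface, by the flux condition and by continuity of u along the arc.
  Expressing grad u (Y tt) as grad u (X) plus the integral of its derivative along the segment
  produces the third remainder.
\<close>

lemma vector_4 [simp]:
  "(vector [x, y, z, w] :: 'a::zero^4) $ 1 = x"
  "(vector [x, y, z, w] :: 'a::zero^4) $ 2 = y"
  "(vector [x, y, z, w] :: 'a::zero^4) $ 3 = z"
  "(vector [x, y, z, w] :: 'a::zero^4) $ 4 = w"
  unfolding vector_def by simp_all

lemma vec2_eq_iff: "(v::'a^2) = w \<longleftrightarrow> v $ 1 = w $ 1 \<and> v $ 2 = w $ 2"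
  by (auto simp: vec_eq_iff forall_2)

lemma vec4_eq_iff: "(v::'a^4) = w \<longleftrightarrow> v $ 1 = w $ 1 \<and> v $ 2 = w $ 2 \<and> v $ 3 = w $ 3 \<and> v $ 4 = w $ 4"
  by (auto simp: vec_eq_iff forall_4)

lemma Vec_nth [simp]:
  "Vec G $ 1 = G $ 1 $ 1" "Vec G $ 2 = G $ 2 $ 1" "Vec G $ 3 = G $ 1 $ 2" "Vec G $ 4 = G $ 2 $ 2"
  by (simp_all add: Vec_def)

lemma bounded_linear_Vec: "bounded_linear Vec"
  by (rule linear_conv_bounded_linear[THEN iffD1], rule linearI) (simp_all add: vec4_eq_iff)

lemma bounded_linear_matrix_apply: "bounded_linear (\<lambda>M::real^'n^'m. M *v h)"
  by (rule linear_conv_bounded_linear[THEN iffD1], rule linearI)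
     (simp_all add: matrix_vector_mult_add_rdistrib scaleR_matrix_vector_assoc)

lemma kronT_I2_mult_Vec: "kronT_I2 p *v Vec G = G *v p"
  by (simp add: vec2_eq_iff matrix_vector_mult_def sum_2 sum_4 kronT_I2_def)

lemma kronT_I2_scaleR: "kronT_I2 (c *\<^sub>R p) *v v = c *\<^sub>R (kronT_I2 p *v v)"
  by (simp add: vec2_eq_iff matrix_vector_mult_def sum_2 sum_4 kronT_I2_def algebra_simps)

lemma Nmat_mult_Vec:
  "Nmat l m n *v Vec G = vector [(stress l m G *v n) $ 1, (stress l m G *v n) $ 2,
     (G *v vector [- n $ 2, n $ 1]) $ 1, (G *v vector [- n $ 2, n $ 1]) $ 2]"
  by (simp add: vec4_eq_iff matrix_vector_mult_def sum_2 sum_4 Nmat_def stress_def algebra_simps)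

lemma invertible_Nmat:
  assumes "l > 0" "m > 0" "n $ 1 ^ 2 + n $ 2 ^ 2 = 1"
  shows "invertible (Nmat l m n)"
proof -
  have "x = 0" if "Nmat l m n *v x = 0" for x
  proof -
    have eqs: "(l + 2*m) * n$1 * x$1 + m * n$2 * x$2 + m * n$2 * x$3 + l * n$1 * x$4 = 0"
      "l * n$2 * x$1 + m * n$1 * x$2 + m * n$1 * x$3 + (l + 2*m) * n$2 * x$4 = 0"
      "- n$2 * x$1 + n$1 * x$3 = 0" "- n$2 * x$2 + n$1 * x$4 = 0"
      using that by (simp_all add: vec4_eq_iff matrix_vector_mult_def sum_4 Nmat_def)
    have "(l + 2*m) * m * x$1 = 0" "(l + 2*m) * m * x$2 = 0"
      "(l + 2*m) * m * x$3 = 0" "(l + 2*m) * m * x$4 = 0"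
      using eqs assms(3) by algebra+
    moreover have "(l + 2*m) * m \<noteq> 0" using assms(1,2) by simp
    ultimately show ?thesis by (simp add: vec4_eq_iff)
  qed
  then have "\<exists>B. B ** Nmat l m n = mat 1" by (intro matrix_left_invertible_ker[THEN iffD2] allI impI)
  then show ?thesis by (rule invertible_left_inverse[THEN iffD2])
qed

lemma matrix_inv_mult_eqI:
  fixes N N' :: "real^'n^'n"
  assumes "invertible N'" "N' *v v' = N *v v"
  shows "(matrix_inv N' ** N) *v v = v'"
proof -
  have "matrix_inv N' ** N' = mat 1"
    using assms(1) unfolding invertible_def matrix_inv_def by (rule someI2_ex) auto
  then show ?thesis
    by (metis assms(2) matrix_vector_mul_assoc matrix_vector_mul_lid)
qed

lemma Nmat_transmission:
  assumes "invertible (Nmat l' m' n)"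
    and "stress l m G *v n = stress l' m' H *v n"
    and "G *v vector [- n $ 2, n $ 1] = H *v vector [- n $ 2, n $ 1]"
  shows "(matrix_inv (Nmat l' m' n) ** Nmat l m n) *v Vec G = Vec H"
proof (rule matrix_inv_mult_eqI[OF assms(1)])
  show "Nmat l' m' n *v Vec H = Nmat l m n *v Vec G"
    unfolding Nmat_mult_Vec using assms(2,3) by simp
qed

lemma unit_normal_components_sq:
  assumes "dcurve \<gamma> a b \<tau> \<noteq> 0"
  shows "(unit_normal \<gamma> a b \<tau>) $ 1 ^ 2 + (unit_normal \<gamma> a b \<tau>) $ 2 ^ 2 = 1"
proof -
  define d where "d = dcurve \<gamma> a b \<tau>"
  have norm_sq: "norm d ^ 2 = d $ 1 ^ 2 + d $ 2 ^ 2"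
    by (simp add: norm_vec_def L2_set_def sum_2)
  have "d $ 1 ^ 2 + d $ 2 ^ 2 \<noteq> 0"
    using assms unfolding d_def[symmetric] norm_sq[symmetric] by simp
  then show ?thesis unfolding unit_normal_def d_def[symmetric]
    by (simp add: power_divide add_divide_distrib[symmetric] norm_sq)
qed

lemma unit_normal_rotate:
  "vector [- unit_normal \<gamma> a b \<tau> $ 2, unit_normal \<gamma> a b \<tau> $ 1]
     = - (1 / norm (dcurve \<gamma> a b \<tau>)) *\<^sub>R dcurve \<gamma> a b \<tau>"
  by (simp add: unit_normal_def vec2_eq_iff)

lemma unit_normal_transmission:
  assumes "dcurve \<gamma> a b \<tau> \<noteq> 0" "l' > 0" "m' > 0"
    and "stress l m G *v unit_normal \<gamma> a b \<tau> = stress l' m' H *v unit_normal \<gamma> a b \<tau>"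
    and "G *v dcurve \<gamma> a b \<tau> = H *v dcurve \<gamma> a b \<tau>"
  shows "(matrix_inv (Nmat l' m' (unit_normal \<gamma> a b \<tau>)) ** Nmat l m (unit_normal \<gamma> a b \<tau>)) *v Vec G
       = Vec H"
proof (rule Nmat_transmission[OF invertible_Nmat[OF assms(2,3) unit_normal_components_sq[OF assms(1)]]
      assms(4)])
  show "G *v vector [- unit_normal \<gamma> a b \<tau> $ 2, unit_normal \<gamma> a b \<tau> $ 1]
      = H *v vector [- unit_normal \<gamma> a b \<tau> $ 2, unit_normal \<gamma> a b \<tau> $ 1]"
    unfolding unit_normal_rotate matrix_vector_mult_scaleR assms(5) ..
qed

lemma jac_mult:
  assumes "f differentiable (at x within S)"
  shows "jac f S x *v h = frechet_derivative f (at x within S) h"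
proof -
  have "bounded_linear (frechet_derivative f (at x within S))"
    using assms by (simp add: frechet_derivative_works has_derivative_bounded_linear)
  then show ?thesis unfolding jac_def by (simp add: matrix_vector_mul(3))
qed

lemma has_vector_derivative_frechet_compose:
  assumes "\<forall>x\<in>S. f differentiable (at x within S)"
    and "c ` I \<subseteq> S" "t \<in> I" "(c has_vector_derivative v) (at t within I)"
  shows "((\<lambda>r. f (c r)) has_vector_derivative frechet_derivative f (at (c t) within S) v) (at t within I)"
proof -
  have "(f has_derivative frechet_derivative f (at (c t) within S)) (at (c t) within S)"
    using assms(1-3) frechet_derivative_works by blast
  then have "(f has_derivative frechet_derivative f (at (c t) within S)) (at (c t) within c ` I)"
    using assms(2) by (rule has_derivative_subset)
  from vector_derivative_diff_chain_within[OF assms(4) this] show ?thesis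
    by (simp add: o_def)
qed

lemma has_vector_derivative_jac_compose:
  assumes "\<forall>x\<in>S. f differentiable (at x within S)"
    and "c ` I \<subseteq> S" "t \<in> I" "(c has_vector_derivative v) (at t within I)"
  shows "((\<lambda>r. f (c r)) has_vector_derivative jac f S (c t) *v v) (at t within I)"
  using has_vector_derivative_frechet_compose[OF assms] jac_mult assms(1-3) by auto

lemma integral_vector_derivative_within:
  fixes f :: "real \<Rightarrow> 'a::banach"
  assumes "a \<le> b" "\<forall>t\<in>{a..b}. f differentiable (at t within {a..b})"
  shows "integral {a..b} (\<lambda>t. vector_derivative f (at t within {a..b})) = f b - f a"
  using assms by (intro integral_unique fundamental_theorem_of_calculus) (auto simp: vector_derivative_works)

lemma taylor_remainder_integral:
  fixes f :: "real \<Rightarrow> 'a::banach"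
  assumes "a \<le> b"
    and "\<forall>t\<in>{a..b}. f differentiable (at t within {a..b})"
    and "\<forall>t\<in>{a..b}. (\<lambda>t'. vector_derivative f (at t' within {a..b})) differentiable (at t within {a..b})"
  shows "integral {a..b} (\<lambda>t. (e - t) *\<^sub>R
            vector_derivative (\<lambda>t'. vector_derivative f (at t' within {a..b})) (at t within {a..b}))
       = ((e - b) *\<^sub>R vector_derivative f (at b within {a..b}) + f b)
       - ((e - a) *\<^sub>R vector_derivative f (at a within {a..b}) + f a)"
proof -
  define f' where "f' = (\<lambda>t'. vector_derivative f (at t' within {a..b}))"
  define f'' where "f'' = (\<lambda>t. vector_derivative f' (at t within {a..b}))"
  have "((\<lambda>t. (e - t) *\<^sub>R f' t + f t) has_vector_derivative (e - t) *\<^sub>R f'' t) (at t within {a..b})"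
    if t: "t \<in> {a..b}" for t
  proof -
    have "(f has_vector_derivative f' t) (at t within {a..b})"
      using assms(2) t unfolding f'_def by (simp add: vector_derivative_works)
    moreover have "(f' has_vector_derivative f'' t) (at t within {a..b})"
      using assms(3) t unfolding f'_def f''_def by (simp add: vector_derivative_works)
    ultimately have "((\<lambda>t. (e - t) *\<^sub>R f' t + f t) has_vector_derivative
        (e - t) *\<^sub>R f'' t + (- 1) *\<^sub>R f' t + f' t) (at t within {a..b})"
      by (auto intro!: derivative_eq_intros)
    then show ?thesis by simp
  qed
  then have "((\<lambda>t. (e - t) *\<^sub>R f'' t) has_integral
      ((e - b) *\<^sub>R f' b + f b) - ((e - a) *\<^sub>R f' a + f a)) {a..b}"
    using fundamental_theorem_of_calculus[OF assms(1), of "\<lambda>t. (e - t) *\<^sub>R f' t + f t"] by simp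
  then show ?thesis unfolding f''_def f'_def by (rule integral_unique)
qed

lemma taylor_remainder_along_path:
  fixes f :: "real^2 \<Rightarrow> real^2"
  assumes "c < d" "p ` {c..d} \<subseteq> S"
    and p': "\<And>t. (p has_vector_derivative v) (at t within {c..d})"
    and "\<forall>x\<in>S. f differentiable (at x within S)" "\<forall>x\<in>S. jac f S differentiable (at x within S)"
  shows "integral {c..d} (\<lambda>t. (e - t) *\<^sub>R vector_derivative
            (\<lambda>t'. vector_derivative (\<lambda>r. f (p r)) (at t' within {c..d})) (at t within {c..d}))
       = ((e - d) *\<^sub>R (jac f S (p d) *v v) + f (p d)) - ((e - c) *\<^sub>R (jac f S (p c) *v v) + f (p c))"
proof -
  have fp': "((\<lambda>r. f (p r)) has_vector_derivative jac f S (p t) *v v) (at t within {c..d})"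
    if "t \<in> {c..d}" for t
    using has_vector_derivative_jac_compose[OF assms(4,2) that p'] .
  have fp'_eq: "vector_derivative (\<lambda>r. f (p r)) (at t within {c..d}) = jac f S (p t) *v v"
    if "t \<in> {c..d}" for t
    using vector_derivative_within_closed_interval[OF assms(1) that fp'[OF that]] .
  have "(\<lambda>t'. vector_derivative (\<lambda>r. f (p r)) (at t' within {c..d})) differentiable (at t within {c..d})"
    if t: "t \<in> {c..d}" for t
  proof (rule differentiable_transform_within[OF _ zero_less_one t])
    show "(\<lambda>r. jac f S (p r) *v v) differentiable (at t within {c..d})"
      using bounded_linear.has_vector_derivative[OF bounded_linear_matrix_apply
          has_vector_derivative_frechet_compose[OF assms(5,2) t p']]
      by (rule differentiableI_vector)
  qed (use fp'_eq in simp)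
  then have "integral {c..d} (\<lambda>t. (e - t) *\<^sub>R vector_derivative
            (\<lambda>t'. vector_derivative (\<lambda>r. f (p r)) (at t' within {c..d})) (at t within {c..d}))
       = ((e - d) *\<^sub>R vector_derivative (\<lambda>r. f (p r)) (at d within {c..d}) + f (p d))
       - ((e - c) *\<^sub>R vector_derivative (\<lambda>r. f (p r)) (at c within {c..d}) + f (p c))"
    using assms(1) differentiableI_vector[OF fp'] by (intro taylor_remainder_integral) auto
  then show ?thesis using assms(1) by (simp add: fp'_eq)
qed

lemma integral_derivative_Vec_jac_along_path:
  assumes "c \<le> d" "p ` {c..d} \<subseteq> S"
    and "\<And>t. (p has_vector_derivative v) (at t within {c..d})"
    and "\<forall>x\<in>S. jac f S differentiable (at x within S)"
  shows "integral {c..d} (\<lambda>t. vector_derivative (\<lambda>r. Vec (jac f S (p r))) (at t within {c..d}))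
       = Vec (jac f S (p d)) - Vec (jac f S (p c))"
proof (rule integral_vector_derivative_within[OF assms(1)], intro ballI)
  fix t assume "t \<in> {c..d}"
  show "(\<lambda>r. Vec (jac f S (p r))) differentiable (at t within {c..d})"
    using bounded_linear.has_vector_derivative[OF bounded_linear_Vec
        has_vector_derivative_frechet_compose[OF assms(4,2) \<open>t \<in> {c..d}\<close> assms(3)]]
    by (rule differentiableI_vector)
qed

lemma taylor_expansion_across_interface:
  fixes f g :: "real^2 \<Rightarrow> real^2" and A X :: "real^2" and M :: "real^4^4"
  defines "Y \<equiv> \<lambda>t. t *\<^sub>R A + (1 - t) *\<^sub>R X"
  assumes tt: "0 < tt" "tt < 1"
    and segment: "Y ` {0..tt} \<subseteq> S" "Y ` {tt..1} \<subseteq> S'"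
    and f: "\<forall>x\<in>S. f differentiable (at x within S)" "\<forall>x\<in>S. jac f S differentiable (at x within S)"
    and g: "\<forall>x\<in>S'. g differentiable (at x within S')" "\<forall>x\<in>S'. jac g S' differentiable (at x within S')"
    and value_eq: "f (Y tt) = g (Y tt)"
    and gradient_jump: "M *v Vec (jac f S (Y tt)) = Vec (jac g S' (Y tt))"
  shows "g A = f X + kronT_I2 (A - X) *v Vec (jac f S X)
            + kronT_I2 (A - Y tt) *v ((M - mat 1) *v Vec (jac f S X))
            + (integral {0..tt} (\<lambda>t. (1 - t) *\<^sub>R vector_derivative
                 (\<lambda>t'. vector_derivative (\<lambda>r. f (Y r)) (at t' within {0..tt})) (at t within {0..tt}))
             + integral {tt..1} (\<lambda>t. (1 - t) *\<^sub>R vector_derivative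
                 (\<lambda>t'. vector_derivative (\<lambda>r. g (Y r)) (at t' within {tt..1})) (at t within {tt..1}))
             + (1 - tt) *\<^sub>R (kronT_I2 (A - X) *v ((M - mat 1) *v
                 integral {0..tt} (\<lambda>t. vector_derivative (\<lambda>r. Vec (jac f S (Y r))) (at t within {0..tt})))))"
proof -
  define P where "P = kronT_I2 (A - X)"
  have Y': "(Y has_vector_derivative A - X) (at t within I)" for t I
    unfolding Y_def has_vector_derivative_def
    by (auto intro!: derivative_eq_intros simp: algebra_simps)
  have Y_ends: "Y 0 = X" "Y 1 = A" "A - Y tt = (1 - tt) *\<^sub>R (A - X)"
    unfolding Y_def by (simp_all add: algebra_simps)
  have P_mult_Vec: "P *v Vec G = G *v (A - X)" for G
    unfolding P_def by (rule kronT_I2_mult_Vec)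
  have R1: "integral {0..tt} (\<lambda>t. (1 - t) *\<^sub>R vector_derivative
       (\<lambda>t'. vector_derivative (\<lambda>r. f (Y r)) (at t' within {0..tt})) (at t within {0..tt}))
    = ((1 - tt) *\<^sub>R (jac f S (Y tt) *v (A - X)) + f (Y tt)) - (jac f S X *v (A - X) + f X)"
    using taylor_remainder_along_path[OF tt(1) segment(1) Y' f] by (simp add: Y_ends)
  have R2: "integral {tt..1} (\<lambda>t. (1 - t) *\<^sub>R vector_derivative
       (\<lambda>t'. vector_derivative (\<lambda>r. g (Y r)) (at t' within {tt..1})) (at t within {tt..1}))
    = g A - ((1 - tt) *\<^sub>R (jac g S' (Y tt) *v (A - X)) + g (Y tt))"
    using taylor_remainder_along_path[OF tt(2) segment(2) Y' g] by (simp add: Y_ends)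
  have R3: "integral {0..tt} (\<lambda>t. vector_derivative (\<lambda>r. Vec (jac f S (Y r))) (at t within {0..tt}))
    = Vec (jac f S (Y tt)) - Vec (jac f S X)"
    using integral_derivative_Vec_jac_along_path[OF _ segment(1) Y' f(2)] tt by (simp add: Y_ends)
  have jump_term: "P *v ((M - mat 1) *v (Vec (jac f S (Y tt)) - Vec (jac f S X)))
      = jac g S' (Y tt) *v (A - X) - jac f S (Y tt) *v (A - X) - P *v ((M - mat 1) *v Vec (jac f S X))"
    by (simp add: matrix_vector_mult_diff_rdistrib matrix_vector_mult_diff_distrib
        gradient_jump P_mult_Vec)
  show ?thesis
    unfolding P_def[symmetric] R1 R2 R3 jump_term Y_ends(3) kronT_I2_scaleR P_mult_Vec value_eq
    by (simp add: algebra_simps)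
qed

lemma connected_image_closure_subset_side:
  assumes "continuous_on (closure J) p" "connected J" "x \<in> J" "p x \<in> U"
    and "p ` J \<subseteq> T \<inter> (U \<union> V)" "open U" "open V" "U \<inter> V = {}"
  shows "p ` closure J \<subseteq> closure (T \<inter> U)"
proof (rule image_closure_subset[OF assms(1) closed_closure])
  have "connected (p ` J)"
    using assms(1,2) by (meson closure_subset connected_continuous_image continuous_on_subset)
  then have "V \<inter> p ` J = {}"
    using connectedD[OF _ assms(6,7)] assms(3-5,8) by blast
  then show "p ` J \<subseteq> closure (T \<inter> U)"
    using assms(5) closure_subset by blast
qed

lemma segment_single_crossing:
  fixes X A :: "'a::real_normed_vector"
  defines "Y \<equiv> \<lambda>t. t *\<^sub>R A + (1 - t) *\<^sub>R X"
  assumes "convex T" "open U" "open V" "U \<inter> V = {}" "T \<subseteq> U \<union> V \<union> G"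
    and X: "X \<in> T \<inter> U" "X \<notin> G" and A: "A \<in> T \<inter> V" "A \<notin> G"
    and tt: "tt \<in> {0..1}" "Y tt \<in> G"
    and crossing_unique: "\<And>t. t \<in> {0..1} \<Longrightarrow> Y t \<in> G \<Longrightarrow> t = tt"
  shows "0 < tt" "tt < 1" "Y ` {0..tt} \<subseteq> closure (T \<inter> U)" "Y ` {tt..1} \<subseteq> closure (T \<inter> V)"
proof -
  have Y_ends: "Y 0 = X" "Y 1 = A" unfolding Y_def by simp_all
  show tt_pos: "0 < tt" and tt_less: "tt < 1"
    using tt X(2) A(2) Y_ends by (metis atLeastAtMost_iff less_eq_real_def)+
  have "Y t \<in> T" if "t \<in> {0..1}" for t
    using convexD[OF assms(2) A(1)[THEN IntD1] X(1)[THEN IntD1], of t "1 - t"] that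
    unfolding Y_def by simp
  then have off_crossing: "Y ` ({0..1} - {tt}) \<subseteq> T \<inter> (U \<union> V)"
    using crossing_unique assms(6) by fastforce
  have Y_cont: "continuous_on I Y" for I
    unfolding Y_def by (intro continuous_intros)
  have "{0..<tt} \<subseteq> {0..1} - {tt}" "{tt<..1} \<subseteq> {0..1} - {tt}"
    using tt_pos tt_less by auto
  then have halves: "Y ` {0..<tt} \<subseteq> T \<inter> (U \<union> V)" "Y ` {tt<..1} \<subseteq> T \<inter> (U \<union> V)"
    using off_crossing by (meson image_mono order_trans)+
  have "Y ` closure {0..<tt} \<subseteq> closure (T \<inter> U)"
    using tt_pos X(1) Y_ends
    by (intro connected_image_closure_subset_side[OF Y_cont _ _ _ halves(1) assms(3,4,5), of 0]) auto
  then show "Y ` {0..tt} \<subseteq> closure (T \<inter> U)" using tt_pos by simp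
  have "Y ` closure {tt<..1} \<subseteq> closure (T \<inter> V)"
    using tt_less A(1) Y_ends halves(2) assms(5)
    by (intro connected_image_closure_subset_side[OF Y_cont _ _ _ _ assms(4,3), of _ 1]) auto
  then show "Y ` {tt..1} \<subseteq> closure (T \<inter> V)" using tt_less by simp
qed

lemma elem_nodes_closed_convex:
  assumes "elem_nodes T V Ed Nd"
  shows "closed T" "convex T"
proof -
  have "triangle_elem T V Ed \<or> rectangle_elem T V Ed"
    using assms unfolding elem_nodes_def by blast
  then have "closed T \<and> convex T"
  proof
    assume "triangle_elem T V Ed"
    then obtain p1 p2 p3 where "T = convex hull {p1, p2, p3}" unfolding triangle_elem_def by blast
    then show ?thesis
      by (simp add: compact_imp_closed compact_convex_hull finite_imp_compact convex_convex_hull)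
  next
    assume "rectangle_elem T V Ed"
    then obtain p q where "T = cbox p q" unfolding rectangle_elem_def by blast
    then show ?thesis by (simp add: closed_cbox convex_box)
  qed
  then show "closed T" "convex T" by simp_all
qed

text \<open>Interior points of the arc lie in \<open>interior T\<close>, where \<open>T \<inter> \<Omega>\<close> is locally just \<open>\<Omega>\<close>.\<close>
lemma interface_arc_subset_closure:
  assumes "interface_elem T Ed \<Gamma> \<gamma> a b" "closed T" "\<Gamma> \<subseteq> frontier \<Omega>"
  shows "\<gamma> ` {a..b} \<subseteq> closure (T \<inter> \<Omega>)"
proof -
  have ab: "a < b" and inj: "inj_on \<gamma> {a..b}"
    and \<gamma>_diff: "\<forall>\<sigma>\<in>{a..b}. \<gamma> differentiable (at \<sigma> within {a..b})"
    and \<Gamma>_T: "\<Gamma> \<inter> T = \<gamma> ` {a..b}" and \<Gamma>_frontier: "\<Gamma> \<inter> frontier T = {\<gamma> a, \<gamma> b}"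
    using assms(1) unfolding interface_elem_def C2_arc_def by auto
  have "\<gamma> \<sigma> \<in> closure (T \<inter> \<Omega>)" if \<sigma>: "\<sigma> \<in> {a<..<b}" for \<sigma>
  proof -
    have on_arc: "\<gamma> \<sigma> \<in> \<Gamma>" "\<gamma> \<sigma> \<in> T" using \<Gamma>_T \<sigma> by auto
    have "\<gamma> \<sigma> \<noteq> \<gamma> a" "\<gamma> \<sigma> \<noteq> \<gamma> b"
      using inj_onD[OF inj, of \<sigma> a] inj_onD[OF inj, of \<sigma> b] \<sigma> ab by auto
    then have "\<gamma> \<sigma> \<in> interior T"
      using on_arc \<Gamma>_frontier assms(2) by (auto simp: frontier_def closure_closed)
    moreover have "\<gamma> \<sigma> \<in> closure \<Omega>"
      using on_arc assms(3) by (auto simp: frontier_def)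
    ultimately have "\<gamma> \<sigma> \<in> closure (interior T \<inter> \<Omega>)"
      using open_Int_closure_subset[of "interior T" \<Omega>] by blast
    also have "\<dots> \<subseteq> closure (T \<inter> \<Omega>)"
      by (intro closure_mono) (use interior_subset in blast)
    finally show ?thesis .
  qed
  moreover have "continuous_on {a..b} \<gamma>"
    using \<gamma>_diff differentiable_imp_continuous_within continuous_on_eq_continuous_within by blast
  ultimately have "\<gamma> ` closure {a<..<b} \<subseteq> closure (T \<inter> \<Omega>)"
    using ab by (intro image_closure_subset) auto
  then show ?thesis using ab by simp
qed

lemma tangential_derivative_eq:
  assumes "C2_arc \<gamma> a b" "\<tau> \<in> {a..b}"
    and "\<gamma> ` {a..b} \<subseteq> S\<^sub>1" "\<gamma> ` {a..b} \<subseteq> S\<^sub>2"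
    and "\<forall>x\<in>S\<^sub>1. f\<^sub>1 differentiable (at x within S\<^sub>1)" "\<forall>x\<in>S\<^sub>2. f\<^sub>2 differentiable (at x within S\<^sub>2)"
    and "\<And>\<sigma>. \<sigma> \<in> {a..b} \<Longrightarrow> f\<^sub>1 (\<gamma> \<sigma>) = f\<^sub>2 (\<gamma> \<sigma>)"
  shows "jac f\<^sub>1 S\<^sub>1 (\<gamma> \<tau>) *v dcurve \<gamma> a b \<tau> = jac f\<^sub>2 S\<^sub>2 (\<gamma> \<tau>) *v dcurve \<gamma> a b \<tau>"
proof -
  have ab: "a < b" and \<gamma>': "(\<gamma> has_vector_derivative dcurve \<gamma> a b \<tau>) (at \<tau> within {a..b})"
    using assms(1,2) unfolding C2_arc_def dcurve_def by (auto simp: vector_derivative_works)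
  have "((\<lambda>\<sigma>. f\<^sub>1 (\<gamma> \<sigma>)) has_vector_derivative jac f\<^sub>1 S\<^sub>1 (\<gamma> \<tau>) *v dcurve \<gamma> a b \<tau>) (at \<tau> within {a..b})"
    by (rule has_vector_derivative_jac_compose[OF assms(5,3,2) \<gamma>'])
  moreover have "((\<lambda>\<sigma>. f\<^sub>1 (\<gamma> \<sigma>)) has_vector_derivative jac f\<^sub>2 S\<^sub>2 (\<gamma> \<tau>) *v dcurve \<gamma> a b \<tau>) (at \<tau> within {a..b})"
    using assms(2,7) has_vector_derivative_jac_compose[OF assms(6,4,2) \<gamma>']
    by (rule has_vector_derivative_transform)
  ultimately show ?thesis
    using vector_derivative_within_closed_interval[OF ab assms(2)] by metis
qed

theorem mainTheorem5:
  fixes \<Omega> :: "bool \<Rightarrow> (real^2) set" and \<Gamma> :: "(real^2) set"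
    and lam mu :: "bool \<Rightarrow> real"
    and T V Nd :: "(real^2) set" and Ed :: "(real^2) set set"
    and \<gamma> :: "real \<Rightarrow> real^2" and a b :: real
    and u :: "bool \<Rightarrow> real^2 \<Rightarrow> real^2"
    and s :: bool and A X :: "real^2" and tt \<tau> :: real
  assumes lame: "\<And>r. lam r > 0" "\<And>r. mu r > 0"
    and dom_open: "\<And>r. open (\<Omega> r)"
    and dom_disj: "\<Omega> True \<inter> \<Omega> False = {}"
    and Gamma_interface: "\<Gamma> \<subseteq> frontier (\<Omega> True) \<inter> frontier (\<Omega> False)"
    and Gamma_disj: "\<And>r. \<Gamma> \<inter> \<Omega> r = {}"
    and T_cover: "T \<subseteq> \<Omega> True \<union> \<Omega> False \<union> \<Gamma>"
    and nodes: "elem_nodes T V Ed Nd"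
    and ielem: "interface_elem T Ed \<Gamma> \<gamma> a b"
    (* u \<in> PC^2_int(T) *)
    and u_C2: "\<And>r. C2_on (closure (T \<inter> \<Omega> r)) (u r)"
    and u_cont: "\<And>y. y \<in> \<Gamma> \<inter> T \<Longrightarrow> u True y = u False y"
    and u_flux: "\<And>\<sigma>. \<sigma> \<in> {a..b} \<Longrightarrow>
        stress (lam True) (mu True) (jac (u True) (closure (T \<inter> \<Omega> True)) (\<gamma> \<sigma>)) *v unit_normal \<gamma> a b \<sigma>
      = stress (lam False) (mu False) (jac (u False) (closure (T \<inter> \<Omega> False)) (\<gamma> \<sigma>)) *v unit_normal \<gamma> a b \<sigma>"
    (* node A_i with i \<in> I^{s'} and X \<in> T^s_* *)
    and A_node: "A \<in> Nd" and A_side: "A \<in> T \<inter> \<Omega> (\<not> s)"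
    and X_star: "X \<in> Tbar T V (\<Omega> s) (\<gamma> a) (\<gamma> b) \<inter> ((T \<inter> \<Omega> s) - Tint T \<gamma> a b)"
    (* \<tilde>Y_i = Y_i(\<tilde>t_i, X) is the unique point of the segment [X, A_i] on \<Gamma> \<inter> T *)
    and tt_range: "tt \<in> {0..1}"
    and tt_hit: "tt *\<^sub>R A + (1 - tt) *\<^sub>R X \<in> \<Gamma> \<inter> T"
    and tt_unique: "\<And>t. t \<in> {0..1} \<Longrightarrow> t *\<^sub>R A + (1 - t) *\<^sub>R X \<in> \<Gamma> \<inter> T \<Longrightarrow> t = tt"
    and tau: "\<tau> \<in> {a..b}" "\<gamma> \<tau> = tt *\<^sub>R A + (1 - tt) *\<^sub>R X"
  shows
    "let Y = (\<lambda>t. t *\<^sub>R A + (1 - t) *\<^sub>R X);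
         Yt = Y tt;
         S = (\<lambda>r. closure (T \<inter> \<Omega> r));
         n = unit_normal \<gamma> a b \<tau>;
         Ms = matrix_inv (Nmat (lam (\<not> s)) (mu (\<not> s)) n) ** Nmat (lam s) (mu s) n;
         g = Vec (jac (u s) (S s) X);
         d2 = (\<lambda>f I t. vector_derivative
                 (\<lambda>t'. vector_derivative (\<lambda>r. f (Y r)) (at t' within I)) (at t within I));
         R1 = integral {0..tt} (\<lambda>t. (1 - t) *\<^sub>R d2 (u s) {0..tt} t);
         R2 = integral {tt..1} (\<lambda>t. (1 - t) *\<^sub>R d2 (u (\<not> s)) {tt..1} t);
         R3 = (1 - tt) *\<^sub>R (kronT_I2 (A - X) *v ((Ms - mat 1) *v
                 integral {0..tt} (\<lambda>t. vector_derivative (\<lambda>r. Vec (jac (u s) (S s) (Y r)))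
                                        (at t within {0..tt}))))
     in u (\<not> s) A = u s X + kronT_I2 (A - X) *v g
                     + kronT_I2 (A - Yt) *v ((Ms - mat 1) *v g)
                     + (R1 + R2 + R3)"
proof -
  let ?S = "\<lambda>r. closure (T \<inter> \<Omega> r)"
  have T: "closed T" "convex T" using elem_nodes_closed_convex[OF nodes] .
  have arc: "C2_arc \<gamma> a b" and \<Gamma>_T: "\<Gamma> \<inter> T = \<gamma> ` {a..b}"
    using ielem unfolding interface_elem_def by auto
  have u_diff: "\<forall>x\<in>?S r. u r differentiable (at x within ?S r)"
      "\<forall>x\<in>?S r. jac (u r) (?S r) differentiable (at x within ?S r)" for r
    using u_C2 unfolding C2_on_def by blast+
  have sides: "\<Omega> s \<inter> \<Omega> (\<not> s) = {}" "T \<subseteq> \<Omega> s \<union> \<Omega> (\<not> s) \<union> \<Gamma> \<inter> T"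
    using dom_disj T_cover by (cases s; auto)+
  have X: "X \<in> T \<inter> \<Omega> s" "X \<notin> \<Gamma> \<inter> T" and A: "A \<in> T \<inter> \<Omega> (\<not> s)" "A \<notin> \<Gamma> \<inter> T"
    using X_star A_side Gamma_disj by auto
  note crossing = segment_single_crossing[OF T(2) dom_open dom_open sides X A tt_range tt_hit tt_unique]
  have arc_closure: "\<gamma> ` {a..b} \<subseteq> ?S r" for r
    using interface_arc_subset_closure[OF ielem T(1)] Gamma_interface by (cases r) auto
  have tangential: "jac (u s) (?S s) (\<gamma> \<tau>) *v dcurve \<gamma> a b \<tau>
      = jac (u (\<not> s)) (?S (\<not> s)) (\<gamma> \<tau>) *v dcurve \<gamma> a b \<tau>"
    using u_cont \<Gamma>_T
    by (intro tangential_derivative_eq[OF arc tau(1) arc_closure arc_closure u_diff(1) u_diff(1)])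
       (cases s; auto)
  have flux: "stress (lam s) (mu s) (jac (u s) (?S s) (\<gamma> \<tau>)) *v unit_normal \<gamma> a b \<tau>
      = stress (lam (\<not> s)) (mu (\<not> s)) (jac (u (\<not> s)) (?S (\<not> s)) (\<gamma> \<tau>)) *v unit_normal \<gamma> a b \<tau>"
    using u_flux[OF tau(1)] by (cases s) simp_all
  have "dcurve \<gamma> a b \<tau> \<noteq> 0" using arc tau(1) unfolding C2_arc_def by blast
  note jump = unit_normal_transmission[OF this lame flux tangential]
  have value_eq: "u s (\<gamma> \<tau>) = u (\<not> s) (\<gamma> \<tau>)"
    using u_cont tt_hit tau(2) by (cases s) auto
  show ?thesis
    unfolding Let_def
    by (rule taylor_expansion_across_interface[OF crossing u_diff u_diff
          value_eq[unfolded tau(2)] jump[unfolded tau(2)]])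
qed

end
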